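(* For all integers $k>1$, \[ c_k=1+O\Bigl(\frac1k\Bigr) \] with an absolute implied constant, where \[ c_k := \frac{2k}{2k-1}\,\frac{\zeta(2-1/k)}{\zeta(2)}\,\zeta(k)^2\prod_{p}\Bigl(1-\frac{2p}{(p+1)p^{k}}\Bigr). \]
   Context: $\zeta$ is the Riemann zeta function and the product is over all primes $p$. *)

theory Defs
  imports "HOL-Analysis.Analysis" "HOL-Computational_Algebra.Primes"
begin

definition zeta :: "real \<Rightarrow> real" where
  "zeta s = (\<Sum>n. 1 / (real (Suc n)) powr s)"

definition prime_prod :: "nat \<Rightarrow> real" where
  "prime_prod k = (\<Prod>p. if prime p then 1 - 2 * real p / ((real p + 1) * real p ^ k) else 1)"

definition c :: "nat \<Rightarrow> real" where
  "c k = (2 * real k / (2 * real k - 1)) * (zeta (2 - 1 / real k) / zeta 2)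
           * (zeta (real k))\<^sup>2 * prime_prod k"

end

theory Submission
  imports Defs
begin

(* Each of the four factors of c k is 1 + O(1/k) uniformly in k > 1, and this property is
   closed under products.  Termwise, n^e - 1 <= e n^e ln n
   and ln n <= 4 n^(1/4) give zeta (2 - e) - zeta 2 <= 4 e zeta (7/4 - e) <= 4 e zeta (5/4).
   Next, zeta k - 1 = sum over n >= 2 of n^-k <= 2^(2-k) (zeta 2 - 1).  Finally the Euler
   product lies between 1 and 1 - sum_p 2/p^k >= 1 - 2 (zeta k - 1), by the Weierstrass
   product inequality. *)

lemma summable_zeta:
  assumes "1 < s"
  shows "summable (\<lambda>n. 1 / real (Suc n) powr s)"
proof -
  have "summable (\<lambda>n. real n powr (-s))"
    using assms by (simp add: summable_real_powr_iff)
  then show ?thesis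
    by (subst (asm) summable_Suc_iff[symmetric]) (simp add: powr_minus_divide)
qed

lemma zeta_minus_one_eq:
  assumes "1 < s"
  shows "summable (\<lambda>n. 1 / real (n + 2) powr s)"
    and "zeta s - 1 = (\<Sum>n. 1 / real (n + 2) powr s)"
proof -
  have "summable (\<lambda>n. 1 / real (Suc (Suc n)) powr s)"
    using summable_zeta[OF assms] by (subst summable_Suc_iff)
  then show "summable (\<lambda>n. 1 / real (n + 2) powr s)"
    by (simp add: add.commute[of _ 2])
  show "zeta s - 1 = (\<Sum>n. 1 / real (n + 2) powr s)"
    using suminf_split_head[OF summable_zeta[OF assms]]
    by (simp add: zeta_def add.commute[of _ 2])
qed

lemma zeta_ge_one:
  assumes "1 < s"
  shows "1 \<le> zeta s"
proof -
  have "0 \<le> (\<Sum>n. 1 / real (n + 2) powr s)"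
    using zeta_minus_one_eq(1)[OF assms] by (intro suminf_nonneg) auto
  then show ?thesis
    using zeta_minus_one_eq(2)[OF assms] by simp
qed

lemma zeta_antimono:
  assumes "1 < s" "s \<le> t"
  shows "zeta t \<le> zeta s"
  unfolding zeta_def
proof (rule suminf_le)
  show "1 / real (Suc n) powr t \<le> 1 / real (Suc n) powr s" for n
    using assms by (intro divide_left_mono powr_mono) auto
qed (use assms summable_zeta[of s] summable_zeta[of t] in auto)

lemma exp_minus_one_le:
  fixes t :: real
  assumes "0 \<le> t"
  shows "exp t - 1 \<le> t * exp t"
proof -
  have "(1 - t) * exp t \<le> exp (-t) * exp t"
    using exp_ge_add_one_self[of "-t"] by (intro mult_right_mono) auto
  then show ?thesis
    by (simp add: exp_minus field_simps)
qed

lemma powr_minus_one_le: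
  fixes x e d :: real
  assumes "1 \<le> x" "0 \<le> e" "0 < d"
  shows "x powr e - 1 \<le> e / d * x powr (e + d)"
proof -
  have "x powr e - 1 = exp (e * ln x) - 1"
    using assms by (simp add: powr_def)
  also have "\<dots> \<le> e * ln x * x powr e"
    using exp_minus_one_le[of "e * ln x"] assms by (simp add: powr_def)
  also have "\<dots> \<le> e * (x powr d / d) * x powr e"
    using ln_powr_bound[of x d] assms by (intro mult_right_mono mult_left_mono) auto
  also have "\<dots> = e / d * x powr (e + d)"
    by (simp add: powr_add)
  finally show ?thesis .
qed

lemma zeta_diff_le:
  assumes "0 \<le> e" "0 < d" "1 < s - e - d"
  shows "zeta (s - e) - zeta s \<le> e / d * zeta (s - e - d)"
proof -
  have sum_le: "summable (\<lambda>n. 1 / real (Suc n) powr r)" if "s - e - d \<le> r" for r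
    using that assms by (intro summable_zeta) auto
  have "zeta (s - e) - zeta s = (\<Sum>n. 1 / real (Suc n) powr (s - e) - 1 / real (Suc n) powr s)"
    unfolding zeta_def by (rule suminf_diff; rule sum_le) (use assms in auto)
  also have "\<dots> \<le> (\<Sum>n. e / d * (1 / real (Suc n) powr (s - e - d)))"
  proof (rule suminf_le)
    fix n
    let ?x = "real (Suc n)"
    have "1 / ?x powr (s - e) - 1 / ?x powr s = (?x powr e - 1) / ?x powr s"
      by (simp add: powr_diff field_simps)
    also have "\<dots> \<le> e / d * ?x powr (e + d) / ?x powr s"
      using powr_minus_one_le[of ?x e d] assms by (intro divide_right_mono) auto
    also have "\<dots> = e / d * (1 / ?x powr (s - e - d))"
      by (simp add: powr_diff powr_add field_simps)
    finally show "1 / ?x powr (s - e) - 1 / ?x powr s \<le> e / d * (1 / ?x powr (s - e - d))" .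
  qed (use assms in \<open>intro summable_diff summable_mult sum_le; linarith\<close>)+
  also have "\<dots> = e / d * zeta (s - e - d)"
    unfolding zeta_def using assms by (intro suminf_mult sum_le) auto
  finally show ?thesis .
qed

lemma zeta_minus_one_le:
  assumes "2 \<le> s"
  shows "zeta s - 1 \<le> 2 powr (2 - s) * (zeta 2 - 1)"
proof -
  have "(\<Sum>n. 1 / real (n + 2) powr s) \<le> (\<Sum>n. 2 powr (2 - s) * (1 / real (n + 2) powr 2))"
  proof (rule suminf_le)
    fix n
    let ?x = "real (n + 2)"
    have "2 powr (s - 2) \<le> ?x powr (s - 2)"
      using assms by (intro powr_mono2) auto
    then have "1 / ?x powr s \<le> 1 / (2 powr (s - 2) * ?x powr 2)"
      by (intro divide_left_mono) (auto simp: powr_diff field_simps)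
    then show "1 / ?x powr s \<le> 2 powr (2 - s) * (1 / ?x powr 2)"
      by (simp add: powr_diff field_simps)
  qed (use assms zeta_minus_one_eq(1)[of s] summable_mult[OF zeta_minus_one_eq(1)[of 2]] in auto)
  also have "\<dots> = 2 powr (2 - s) * (zeta 2 - 1)"
    using suminf_mult[OF zeta_minus_one_eq(1)[of 2], of "2 powr (2 - s)"] zeta_minus_one_eq(2)[of 2]
    by simp
  finally show ?thesis
    using zeta_minus_one_eq(2) assms by simp
qed

lemma prodinf_one_minus_bounds:
  fixes a :: "nat \<Rightarrow> real"
  assumes "summable a" and "\<And>n. a n \<in> {0..1}"
  shows "1 - suminf a \<le> (\<Prod>n. 1 - a n)" and "(\<Prod>n. 1 - a n) \<le> 1"
proof -
  have "convergent_prod (\<lambda>n. 1 - a n)"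
    using assms by (intro abs_convergent_prod_imp_convergent_prod summable_imp_abs_convergent_prod) auto
  then have lim: "(\<lambda>n. \<Prod>i\<le>n. 1 - a i) \<longlonglongrightarrow> (\<Prod>n. 1 - a n)"
    by (rule convergent_prod_LIMSEQ)
  have "1 - suminf a \<le> (\<Prod>i\<le>n. 1 - a i)" for n
  proof -
    have "sum a {..n} \<le> suminf a"
      using assms by (intro sum_le_suminf) auto
    moreover have "1 - sum a {..n} \<le> (\<Prod>i\<le>n. 1 - a i)"
      using assms by (intro Weierstrass_prod_ineq) auto
    ultimately show ?thesis
      by linarith
  qed
  then show "1 - suminf a \<le> (\<Prod>n. 1 - a n)"
    by (intro LIMSEQ_le_const[OF lim]) auto
  have "(\<Prod>i\<le>n. 1 - a i) \<le> 1" for n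
    using assms by (intro prod_le_1) auto
  then show "(\<Prod>n. 1 - a n) \<le> 1"
    by (intro LIMSEQ_le_const2[OF lim]) auto
qed

lemma euler_factor_le:
  fixes p k :: nat
  shows "2 * real p / ((real p + 1) * real p ^ k) \<le> 2 / real p ^ k"
proof -
  have "2 * real p / ((real p + 1) * real p ^ k) = 2 / real p ^ k * (real p / (real p + 1))"
    by simp
  also have "\<dots> \<le> 2 / real p ^ k"
    by (intro mult_left_le) auto
  finally show ?thesis .
qed

lemma prime_prod_bounds:
  assumes "2 \<le> k"
  shows "1 - 2 * (zeta k - 1) \<le> prime_prod k" and "prime_prod k \<le> 1"
proof -
  define a where "a n = (if prime n then 2 * real n / ((real n + 1) * real n ^ k) else 0)" for n
  have a_le: "a n \<le> 2 / real n ^ k" for n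
    using euler_factor_le[of n k] by (auto simp: a_def)
  have a_shift_le: "a (n + 2) \<le> 2 * (1 / real (n + 2) powr k)" for n
    using a_le[of "n + 2"] by (simp add: powr_realpow)
  have a_bounds: "a n \<in> {0..1}" for n
  proof (cases "n < 2")
    case False
    then have "real n ^ 1 \<le> real n ^ k"
      using assms by (intro power_increasing) auto
    then have "2 \<le> real n ^ k"
      using False by (simp only: power_one_right)
    then have "2 / real n ^ k \<le> 1"
      using False by (simp add: divide_le_eq_1)
    moreover have "0 \<le> a n"
      by (simp add: a_def)
    ultimately show ?thesis
      using a_le[of n] by simp
  qed (auto simp: a_def dest: prime_ge_2_nat)
  have sum_shift: "summable (\<lambda>n. 2 * (1 / real (n + 2) powr k))"
    using assms by (intro summable_mult zeta_minus_one_eq(1)) auto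
  have "summable (\<lambda>n. a (n + 2))"
    using a_bounds a_shift_le by (intro summable_comparison_test[OF _ sum_shift]) auto
  then have sum_a: "summable a"
    by (rule summable_iff_shift[THEN iffD1])
  have "sum a {..<2} = 0"
    by (simp add: a_def numeral_2_eq_2)
  then have "suminf a = (\<Sum>n. a (n + 2))"
    using suminf_split_initial_segment[OF sum_a, of 2] by simp
  also have "\<dots> \<le> (\<Sum>n. 2 * (1 / real (n + 2) powr k))"
    using a_shift_le by (intro suminf_le sum_shift \<open>summable (\<lambda>n. a (n + 2))\<close>)
  also have "\<dots> = 2 * (zeta k - 1)"
    using assms suminf_mult[OF zeta_minus_one_eq(1), of k 2] zeta_minus_one_eq(2)[of k] by simp
  finally have "suminf a \<le> 2 * (zeta k - 1)" .
  moreover have "prime_prod k = (\<Prod>n. 1 - a n)"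
    unfolding prime_prod_def a_def by (intro prodinf_cong) simp
  ultimately show "1 - 2 * (zeta k - 1) \<le> prime_prod k" and "prime_prod k \<le> 1"
    using prodinf_one_minus_bounds[OF sum_a a_bounds] by auto
qed

lemma abs_mult_minus_one_le:
  fixes x y a b u :: real
  assumes x: "\<bar>x - 1\<bar> \<le> a * u" and y: "\<bar>y - 1\<bar> \<le> b * u" and "0 \<le> b" "u \<le> 1"
  shows "\<bar>x * y - 1\<bar> \<le> (a + b + a * b) * u"
proof -
  have "x * y - 1 = (x - 1) * (y - 1) + (x - 1) + (y - 1)"
    by (simp add: algebra_simps)
  then have "\<bar>x * y - 1\<bar> \<le> \<bar>x - 1\<bar> * \<bar>y - 1\<bar> + \<bar>x - 1\<bar> + \<bar>y - 1\<bar>"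
    using abs_triangle_ineq[of "(x - 1) * (y - 1) + (x - 1)" "y - 1"]
      abs_triangle_ineq[of "(x - 1) * (y - 1)" "x - 1"]
    by (simp only: abs_mult)
  also have "\<dots> \<le> (a * u) * (b * u) + a * u + b * u"
    using x y by (intro add_mono mult_mono) auto
  also have "(a * u) * (b * u) \<le> (a * u) * b"
    using x assms(3,4) by (intro mult_left_mono) (auto simp: mult_left_le)
  finally show ?thesis
    by (simp add: algebra_simps)
qed

definition one_plus_O_inverse :: "(nat \<Rightarrow> real) \<Rightarrow> bool" where
  "one_plus_O_inverse f \<longleftrightarrow> (\<exists>C. \<forall>k > 1. \<bar>f k - 1\<bar> \<le> C / real k)"

lemma one_plus_O_inverse_mult:
  assumes "one_plus_O_inverse f" and "one_plus_O_inverse g"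
  shows "one_plus_O_inverse (\<lambda>k. f k * g k)"
proof -
  obtain A where A: "\<And>k. k > 1 \<Longrightarrow> \<bar>f k - 1\<bar> \<le> A * (1 / real k)"
    using assms(1) by (auto simp: one_plus_O_inverse_def)
  obtain B where B: "\<And>k. k > 1 \<Longrightarrow> \<bar>g k - 1\<bar> \<le> B * (1 / real k)"
    using assms(2) by (auto simp: one_plus_O_inverse_def)
  have "\<bar>g 2 - 1\<bar> \<le> B / 2"
    using B[of 2] by simp
  then have "0 \<le> B"
    using abs_ge_zero[of "g 2 - 1"] by linarith
  then have "\<bar>f k * g k - 1\<bar> \<le> (A + B + A * B) / real k" if "k > 1" for k
    using abs_mult_minus_one_le[OF A B] that by simp
  then show ?thesis
    unfolding one_plus_O_inverse_def by blast
qed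

lemma one_plus_O_inverse_ratio: "one_plus_O_inverse (\<lambda>k. 2 * real k / (2 * real k - 1))"
  unfolding one_plus_O_inverse_def
proof (intro exI[of _ 1] allI impI)
  fix k :: nat
  assume "k > 1"
  then have "2 * real k / (2 * real k - 1) - 1 = 1 / (2 * real k - 1)"
    by (simp add: field_simps)
  moreover have "1 / (2 * real k - 1) \<le> 1 / real k"
    using \<open>k > 1\<close> by (intro divide_left_mono) auto
  moreover have "0 \<le> 1 / (2 * real k - 1)"
    using \<open>k > 1\<close> by simp
  ultimately show "\<bar>2 * real k / (2 * real k - 1) - 1\<bar> \<le> 1 / real k"
    by simp
qed

lemma one_plus_O_inverse_zeta_ratio: "one_plus_O_inverse (\<lambda>k. zeta (2 - 1 / real k) / zeta 2)"
  unfolding one_plus_O_inverse_def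
proof (intro exI[of _ "4 * zeta (5 / 4)"] allI impI)
  fix k :: nat
  assume "k > 1"
  define e where "e = 1 / real k"
  have e: "0 < e" "e \<le> 1 / 2"
    using \<open>k > 1\<close> by (auto simp: e_def field_simps)
  have z2: "1 \<le> zeta 2"
    by (rule zeta_ge_one) simp
  have diff_nonneg: "0 \<le> zeta (2 - e) - zeta 2"
    using e zeta_antimono[of "2 - e" 2] by auto
  have "zeta (2 - e) - zeta 2 \<le> e / (1 / 4) * zeta (2 - e - 1 / 4)"
    using e by (intro zeta_diff_le) auto
  also have "\<dots> \<le> e / (1 / 4) * zeta (5 / 4)"
    using e by (intro mult_left_mono zeta_antimono) auto
  finally have diff_le: "zeta (2 - e) - zeta 2 \<le> 4 * zeta (5 / 4) * e"
    by (simp add: mult_ac)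
  have "\<bar>zeta (2 - e) / zeta 2 - 1\<bar> = (zeta (2 - e) - zeta 2) / zeta 2"
    using diff_nonneg z2 by (simp add: diff_divide_distrib)
  also have "\<dots> \<le> zeta (2 - e) - zeta 2"
    using diff_nonneg z2 by (simp add: divide_le_eq mult_le_cancel_left1)
  finally show "\<bar>zeta (2 - 1 / real k) / zeta 2 - 1\<bar> \<le> 4 * zeta (5 / 4) / real k"
    using diff_le by (simp add: e_def)
qed

lemma zeta_minus_one_le_inverse:
  assumes "2 \<le> k"
  shows "zeta (real k) - 1 \<le> 4 * (zeta 2 - 1) / real k"
proof -
  have "2 powr (2 - real k) = 4 / 2 ^ k"
    by (simp add: powr_diff powr_realpow)
  also have "\<dots> \<le> 4 / real k"
    using assms by (intro divide_left_mono) (auto simp: less_imp_le)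
  finally have "2 powr (2 - real k) * (zeta 2 - 1) \<le> 4 / real k * (zeta 2 - 1)"
    using zeta_ge_one[of 2] by (intro mult_right_mono) auto
  then show ?thesis
    using zeta_minus_one_le[of k] assms by simp
qed

lemma one_plus_O_inverse_zeta: "one_plus_O_inverse (\<lambda>k. zeta (real k))"
  unfolding one_plus_O_inverse_def
proof (intro exI[of _ "4 * (zeta 2 - 1)"] allI impI)
  fix k :: nat
  assume "k > 1"
  then show "\<bar>zeta (real k) - 1\<bar> \<le> 4 * (zeta 2 - 1) / real k"
    using zeta_ge_one[of k] zeta_minus_one_le_inverse[of k] by simp
qed

lemma one_plus_O_inverse_prime_prod: "one_plus_O_inverse prime_prod"
  unfolding one_plus_O_inverse_def
proof (intro exI[of _ "8 * (zeta 2 - 1)"] allI impI)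
  fix k :: nat
  assume "k > 1"
  then have "\<bar>prime_prod k - 1\<bar> = 1 - prime_prod k"
    using prime_prod_bounds(2)[of k] by simp
  also have "\<dots> \<le> 2 * (zeta (real k) - 1)"
    using prime_prod_bounds(1)[of k] \<open>k > 1\<close> by simp
  also have "\<dots> \<le> 2 * (4 * (zeta 2 - 1) / real k)"
    using zeta_minus_one_le_inverse[of k] \<open>k > 1\<close> by (intro mult_left_mono) auto
  finally show "\<bar>prime_prod k - 1\<bar> \<le> 8 * (zeta 2 - 1) / real k"
    by simp
qed

theorem theorem3p1:
  shows "\<exists>C::real. \<forall>k::nat. k > 1 \<longrightarrow> \<bar>c k - 1\<bar> \<le> C / real k"
proof -
  have c_eq: "c = (\<lambda>k. (2 * real k / (2 * real k - 1) * (zeta (2 - 1 / real k) / zeta 2))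
                 * (zeta (real k) * zeta (real k)) * prime_prod k)"
    by (simp add: fun_eq_iff c_def power2_eq_square)
  have "one_plus_O_inverse c"
    unfolding c_eq
    by (intro one_plus_O_inverse_mult one_plus_O_inverse_ratio one_plus_O_inverse_zeta_ratio
        one_plus_O_inverse_zeta one_plus_O_inverse_prime_prod)
  then show ?thesis
    unfolding one_plus_O_inverse_def .
qed

end
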